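(* Let $G$ be a cohomologically finite dimensional locally compact second countable group. Then $\dim_{\mathbb{R}}\mathrm{Pol}_d(G)<+\infty$ for all $d\in\mathbb{N}$.
   Context: $G$ is cohomologically finite dimensional if $\dim_{\mathbb{R}}H^n(G,\mathcal{E})<\infty$ (continuous cohomology) for every finite dimensional continuous $G$-module $\mathcal{E}$ and every $n\in\mathbb{N}$. For $\xi\colon G\to\mathbb{R}$ and $g\in G$ let $(\partial_g\xi)(h)=\xi(g^{-1}h)-\xi(h)$. $\mathrm{Pol}_d(G)$ is the space of continuous $\xi\colon G\to\mathbb{R}$ such that $\partial_{g_1}\cdots\partial_{g_{d+1}}\xi\equiv0$ for all $g_1,\dots,g_{d+1}\in G$ (continuous polynomial maps of degree at most $d$). *)

theory Defs
  imports "HOL-Analysis.Analysis" "HOL-Algebra.Group"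
begin

definition topological_group :: "('g, 'b) monoid_scheme \<Rightarrow> 'g topology \<Rightarrow> bool" where
  "topological_group G T \<longleftrightarrow>
     group G \<and> topspace T = carrier G \<and>
     continuous_map (prod_topology T T) T (\<lambda>(x, y). x \<otimes>\<^bsub>G\<^esub> y) \<and>
     continuous_map T T (\<lambda>x. inv\<^bsub>G\<^esub> x)"

definition lcsc_group :: "('g, 'b) monoid_scheme \<Rightarrow> 'g topology \<Rightarrow> bool" where
  "lcsc_group G T \<longleftrightarrow> topological_group G T \<and> Hausdorff_space T \<and>
     locally_compact_space T \<and> second_countable T"

section \<open>Finite dimensional continuous G-modules, modelled as R^m with a matrix representation\<close>

text \<open>A representation on R^m: rho g k l is the (k,l) matrix entry (k,l < m) of the action of g.\<close>
definition cont_rep :: "('g, 'b) monoid_scheme \<Rightarrow> 'g topology \<Rightarrow> nat \<Rightarrow> ('g \<Rightarrow> nat \<Rightarrow> nat \<Rightarrow> real) \<Rightarrow> bool" where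
  "cont_rep G T m rho \<longleftrightarrow>
     (\<forall>k<m. \<forall>l<m. continuous_map T euclideanreal (\<lambda>g. rho g k l)) \<and>
     (\<forall>k<m. \<forall>l<m. rho \<one>\<^bsub>G\<^esub> k l = (if k = l then 1 else 0)) \<and>
     (\<forall>g\<in>carrier G. \<forall>h\<in>carrier G. \<forall>k<m. \<forall>l<m.
        rho (g \<otimes>\<^bsub>G\<^esub> h) k l = (\<Sum>p<m. rho g k p * rho h p l))"

text \<open>An n-cochain is a map G^n \<rightarrow> R^m, where G^n = PiE {..<n} (\<lambda>_. carrier G) carries the product
  topology and a vector of R^m is a function nat \<Rightarrow> real of which only the coordinates < m matter.\<close>

definition cochains :: "'g topology \<Rightarrow> nat \<Rightarrow> nat \<Rightarrow> ((nat \<Rightarrow> 'g) \<Rightarrow> nat \<Rightarrow> real) set" where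
  "cochains T m n = {f. \<forall>k<m. continuous_map (product_topology (\<lambda>_. T) {..<n}) euclideanreal (\<lambda>x. f x k)}"

definition coboundary :: "('g, 'b) monoid_scheme \<Rightarrow> nat \<Rightarrow> ('g \<Rightarrow> nat \<Rightarrow> nat \<Rightarrow> real) \<Rightarrow> nat \<Rightarrow>
    ((nat \<Rightarrow> 'g) \<Rightarrow> nat \<Rightarrow> real) \<Rightarrow> (nat \<Rightarrow> 'g) \<Rightarrow> nat \<Rightarrow> real" where
  "coboundary G m rho n f x k =
     (\<Sum>l<m. rho (x 0) k l * f (restrict (\<lambda>i. x (Suc i)) {..<n}) l)
     + (\<Sum>j<n. (-1) ^ (j + 1) *
          f (restrict (\<lambda>i. if i < j then x i else if i = j then x j \<otimes>\<^bsub>G\<^esub> x (Suc j) else x (Suc i)) {..<n}) k)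
     + (-1) ^ (n + 1) * f (restrict x {..<n}) k"

definition cocycles :: "('g, 'b) monoid_scheme \<Rightarrow> 'g topology \<Rightarrow> nat \<Rightarrow> ('g \<Rightarrow> nat \<Rightarrow> nat \<Rightarrow> real) \<Rightarrow> nat \<Rightarrow>
    ((nat \<Rightarrow> 'g) \<Rightarrow> nat \<Rightarrow> real) set" where
  "cocycles G T m rho n = {f \<in> cochains T m n.
      \<forall>x\<in>PiE {..<Suc n} (\<lambda>_. carrier G). \<forall>k<m. coboundary G m rho n f x k = 0}"

definition is_coboundary :: "('g, 'b) monoid_scheme \<Rightarrow> 'g topology \<Rightarrow> nat \<Rightarrow> ('g \<Rightarrow> nat \<Rightarrow> nat \<Rightarrow> real) \<Rightarrow> nat \<Rightarrow>
    ((nat \<Rightarrow> 'g) \<Rightarrow> nat \<Rightarrow> real) \<Rightarrow> bool" where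
  "is_coboundary G T m rho n g \<longleftrightarrow>
     (case n of
        0 \<Rightarrow> (\<forall>x\<in>PiE {..<0} (\<lambda>_. carrier G). \<forall>k<m. g x k = 0)
      | Suc n' \<Rightarrow> (\<exists>h\<in>cochains T m n'.
           \<forall>x\<in>PiE {..<n} (\<lambda>_. carrier G). \<forall>k<m. g x k = coboundary G m rho n' h x k))"

text \<open>dim H^n(G, R^m_rho) < \<infinity>: finitely many cocycles span Z^n modulo B^n.\<close>
definition fin_dim_cohomology :: "('g, 'b) monoid_scheme \<Rightarrow> 'g topology \<Rightarrow> nat \<Rightarrow> ('g \<Rightarrow> nat \<Rightarrow> nat \<Rightarrow> real) \<Rightarrow> nat \<Rightarrow> bool" where
  "fin_dim_cohomology G T m rho n \<longleftrightarrow>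
     (\<exists>(r::nat) b. (\<forall>j<r. b j \<in> cocycles G T m rho n) \<and>
        (\<forall>f\<in>cocycles G T m rho n. \<exists>c::nat \<Rightarrow> real.
           is_coboundary G T m rho n (\<lambda>x k. f x k - (\<Sum>j<r. c j * b j x k))))"

definition cohom_fin_dim :: "('g, 'b) monoid_scheme \<Rightarrow> 'g topology \<Rightarrow> bool" where
  "cohom_fin_dim G T \<longleftrightarrow>
     (\<forall>m rho n. cont_rep G T m rho \<longrightarrow> fin_dim_cohomology G T m rho n)"

definition left_diff :: "('g, 'b) monoid_scheme \<Rightarrow> 'g \<Rightarrow> ('g \<Rightarrow> real) \<Rightarrow> 'g \<Rightarrow> real" where
  "left_diff G g \<xi> h = \<xi> (inv\<^bsub>G\<^esub> g \<otimes>\<^bsub>G\<^esub> h) - \<xi> h"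

fun iter_diff :: "('g, 'b) monoid_scheme \<Rightarrow> 'g list \<Rightarrow> ('g \<Rightarrow> real) \<Rightarrow> 'g \<Rightarrow> real" where
  "iter_diff G [] \<xi> = \<xi>"
| "iter_diff G (g # gs) \<xi> = left_diff G g (iter_diff G gs \<xi>)"

definition Pol :: "('g, 'b) monoid_scheme \<Rightarrow> 'g topology \<Rightarrow> nat \<Rightarrow> ('g \<Rightarrow> real) set" where
  "Pol G T d = {\<xi>. continuous_map T euclideanreal \<xi> \<and>
      (\<forall>gs. length gs = Suc d \<and> set gs \<subseteq> carrier G \<longrightarrow>
         (\<forall>h\<in>carrier G. iter_diff G gs \<xi> h = 0))}"

text \<open>A space of real functions on S is finite dimensional (functions identified when equal on S).\<close>
definition fin_dim_fun_space :: "'g set \<Rightarrow> ('g \<Rightarrow> real) set \<Rightarrow> bool" where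
  "fin_dim_fun_space S A \<longleftrightarrow>
     (\<exists>(r::nat) b. \<forall>\<xi>\<in>A. \<exists>c::nat \<Rightarrow> real. \<forall>x\<in>S. \<xi> x = (\<Sum>j<r. c j * b j x))"

end

theory Submission
  imports Defs
begin

text \<open>Induction on \<open>d\<close>; \<open>Pol\<^sub>0\<close> consists of the constants. Given a finite dimensional \<open>Pol\<^sub>d\<close>, choose
  points \<open>x\<^sub>k\<close> and a dual basis \<open>e\<^sub>k\<close> of \<open>Pol\<^sub>d\<close>. Left translation acts on \<open>Pol\<^sub>d\<close> through a continuous
  matrix representation \<open>\<rho>\<close>, and \<open>\<xi> \<mapsto> (g \<mapsto> ((\<partial>\<^sub>g \<xi>)(x\<^sub>k))\<^sub>k)\<close> is a linear map from \<open>Pol\<^bsub>d+1\<^esub>\<close> to the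
  1-cocycles for \<open>\<rho>\<close>. If this cocycle is the coboundary \<open>g \<mapsto> \<rho>(g) w - w\<close>, then \<open>\<xi>\<close> and \<open>\<Sum>\<^sub>k w\<^sub>k e\<^sub>k\<close> have
  the same differences and thus differ by a constant. As \<open>H\<^sup>1(G, \<rho>)\<close> is finite dimensional, \<open>Pol\<^bsub>d+1\<^esub>\<close> is
  spanned by finitely many functions together with \<open>e\<^sub>0, \<dots>, e\<^bsub>m-1\<^esub>\<close> and the constants.\<close>

section \<open>Finite dimensional spaces of real functions\<close>

definition lincomb_closed :: "('a \<Rightarrow> real) set \<Rightarrow> bool" where
  "lincomb_closed A \<longleftrightarrow> (\<forall>f\<in>A. \<forall>g\<in>A. \<forall>c. (\<lambda>y. f y - c * g y) \<in> A)"

lemma lincomb_closedD: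
  assumes "lincomb_closed A" "f \<in> A" "g \<in> A"
  shows "(\<lambda>y. f y - c * g y) \<in> A"
  using assms unfolding lincomb_closed_def by blast

lemma lincomb_closed_diff_sum:
  fixes k :: nat
  assumes "lincomb_closed A" "f \<in> A" "\<forall>l<k. g l \<in> A"
  shows "(\<lambda>y. f y - (\<Sum>l<k. c l * g l y)) \<in> A"
  using assms(3)
proof (induction k)
  case 0
  then show ?case using assms(2) by simp
next
  case (Suc k)
  then have "(\<lambda>y. (\<lambda>y. f y - (\<Sum>l<k. c l * g l y)) y - c k * g k y) \<in> A"
    by (intro lincomb_closedD[OF assms(1)]) simp_all
  then show ?case by (simp add: algebra_simps)
qed

definition interpolation_basis ::
    "'a set \<Rightarrow> ('a \<Rightarrow> real) set \<Rightarrow> nat \<Rightarrow> (nat \<Rightarrow> 'a) \<Rightarrow> (nat \<Rightarrow> 'a \<Rightarrow> real) \<Rightarrow> bool" where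
  "interpolation_basis S A n xs es \<longleftrightarrow>
     (\<forall>l<n. es l \<in> A \<and> xs l \<in> S) \<and>
     (\<forall>l<n. \<forall>j<n. es l (xs j) = (if l = j then 1 else 0)) \<and>
     (\<forall>f\<in>A. \<forall>y\<in>S. f y = (\<Sum>l<n. f (xs l) * es l y))"

lemma interpolation_basis_vanishing:
  assumes "\<forall>f\<in>A. \<forall>y\<in>S. f y = 0"
  shows "interpolation_basis S A 0 xs es"
  using assms unfolding interpolation_basis_def by simp

lemma interpolation_basis_extend:
  assumes A: "lincomb_closed A" and e: "e \<in> A" "e x = 1" and x: "x \<in> S"
    and basis: "interpolation_basis S {g \<in> A. g x = 0} k xs es"
  defines "e' \<equiv> \<lambda>y. e y - (\<Sum>l<k. e (xs l) * es l y)"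
  shows "interpolation_basis S A (Suc k) (xs(k := x)) (es(k := e'))"
proof -
  have esA: "\<forall>l<k. es l \<in> A" and es_x: "\<And>l. l < k \<Longrightarrow> es l x = 0" and xsS: "\<forall>l<k. xs l \<in> S"
    and delta: "\<forall>l<k. \<forall>j<k. es l (xs j) = (if l = j then 1 else 0)"
    and expand: "\<forall>g\<in>{g \<in> A. g x = 0}. \<forall>y\<in>S. g y = (\<Sum>l<k. g (xs l) * es l y)"
    using basis unfolding interpolation_basis_def by auto
  have e'A: "e' \<in> A" unfolding e'_def by (rule lincomb_closed_diff_sum[OF A e(1) esA])
  have e'_xs: "e' (xs j) = 0" if "j < k" for j
  proof -
    have "(\<Sum>l<k. e (xs l) * es l (xs j)) = (\<Sum>l<k. if l = j then e (xs j) else 0)"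
      using delta that by (intro sum.cong) auto
    then show ?thesis unfolding e'_def using that by simp
  qed
  have e'_x: "e' x = 1" unfolding e'_def using es_x e(2) by simp
  have expand': "g y = (\<Sum>l<Suc k. g ((xs(k := x)) l) * (es(k := e')) l y)"
    if g: "g \<in> A" and y: "y \<in> S" for g y
  proof -
    have "(\<lambda>y. g y - g x * e y) \<in> {g \<in> A. g x = 0}"
      using lincomb_closedD[OF A g e(1)] e(2) by simp
    from bspec[OF bspec[OF expand this] y]
    have "g y - g x * e y = (\<Sum>l<k. (g (xs l) - g x * e (xs l)) * es l y)" by simp
    then have "g y = (\<Sum>l<k. g (xs l) * es l y) + g x * e' y"
      unfolding e'_def by (simp add: algebra_simps sum_subtractf sum_distrib_left)
    then show ?thesis by simp
  qed
  have "\<forall>l<Suc k. \<forall>j<Suc k. (es(k := e')) l ((xs(k := x)) j) = (if l = j then 1 else 0)"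
    using delta es_x e'_xs e'_x by (simp add: less_Suc_eq)
  moreover have "\<forall>l<Suc k. (es(k := e')) l \<in> A \<and> (xs(k := x)) l \<in> S"
    using esA e'A xsS x by (simp add: less_Suc_eq)
  ultimately show ?thesis
    unfolding interpolation_basis_def using expand' by blast
qed

lemma span_eliminate:
  fixes c a :: "'b \<Rightarrow> real"
  assumes J: "finite J" and j0: "j0 \<in> J" "a j0 \<noteq> 0"
    and a: "\<forall>y\<in>S. e y = (\<Sum>j\<in>J. a j * \<beta> j y)" and c: "\<forall>y\<in>S. g y = (\<Sum>j\<in>J. c j * \<beta> j y)"
    and x: "x \<in> S" "e x = 1" "g x = 0"
  shows "\<exists>c'. \<forall>y\<in>S. g y = (\<Sum>j\<in>J - {j0}. c' j * (\<beta> j y - \<beta> j x * e y))"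
proof -
  define c' where "c' = (\<lambda>j. c j - c j0 / a j0 * a j)"
  have c'_span: "(\<Sum>j\<in>J - {j0}. c' j * \<beta> j y) = g y - c j0 / a j0 * e y" if y: "y \<in> S" for y
  proof -
    have "(\<Sum>j\<in>J - {j0}. c' j * \<beta> j y)
        = (\<Sum>j\<in>J - {j0}. c j * \<beta> j y) - c j0 / a j0 * (\<Sum>j\<in>J - {j0}. a j * \<beta> j y)"
      by (simp add: c'_def algebra_simps sum_subtractf sum_distrib_left)
    also have "(\<Sum>j\<in>J - {j0}. c j * \<beta> j y) = g y - c j0 * \<beta> j0 y"
      using c y j0 J by (simp add: sum.remove)
    also have "(\<Sum>j\<in>J - {j0}. a j * \<beta> j y) = e y - a j0 * \<beta> j0 y"
      using a y j0 J by (simp add: sum.remove)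
    finally show ?thesis using j0 by (simp add: field_simps)
  qed
  have "g y = (\<Sum>j\<in>J - {j0}. c' j * (\<beta> j y - \<beta> j x * e y))" if y: "y \<in> S" for y
  proof -
    have "(\<Sum>j\<in>J - {j0}. c' j * (\<beta> j y - \<beta> j x * e y))
        = (\<Sum>j\<in>J - {j0}. c' j * \<beta> j y) - (\<Sum>j\<in>J - {j0}. c' j * \<beta> j x) * e y"
      by (simp add: right_diff_distrib sum_subtractf sum_distrib_left sum_distrib_right mult_ac)
    then show ?thesis using c'_span[OF y] c'_span[OF x(1)] x(2,3) by simp
  qed
  then show ?thesis by blast
qed

lemma vanishing_subspace_span:
  fixes A :: "('a \<Rightarrow> real) set"
  assumes J: "finite J"
    and span: "\<And>f. f \<in> A \<Longrightarrow> \<exists>c. \<forall>y\<in>S. f y = (\<Sum>j\<in>J. c j * \<beta> j y)"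
    and e: "e \<in> A" "e x = 1" and x: "x \<in> S"
  obtains j0 where "j0 \<in> J"
    "\<And>g. g \<in> A \<Longrightarrow> g x = 0 \<Longrightarrow> \<exists>c. \<forall>y\<in>S. g y = (\<Sum>j\<in>J - {j0}. c j * (\<beta> j y - \<beta> j x * e y))"
proof -
  obtain a where a: "\<forall>y\<in>S. e y = (\<Sum>j\<in>J. a j * \<beta> j y)" using span e(1) by blast
  have "\<exists>j0\<in>J. a j0 \<noteq> 0"
  proof (rule ccontr)
    assume "\<not> (\<exists>j0\<in>J. a j0 \<noteq> 0)"
    then have "(\<Sum>j\<in>J. a j * \<beta> j x) = 0" by (intro sum.neutral) auto
    then have "e x = 0" using a x by simp
    with e(2) show False by simp
  qed
  then obtain j0 where j0: "j0 \<in> J" "a j0 \<noteq> 0" by blast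
  have "\<exists>c. \<forall>y\<in>S. g y = (\<Sum>j\<in>J - {j0}. c j * (\<beta> j y - \<beta> j x * e y))"
    if g: "g \<in> A" "g x = 0" for g
  proof -
    obtain c where "\<forall>y\<in>S. g y = (\<Sum>j\<in>J. c j * \<beta> j y)" using span g(1) by blast
    from span_eliminate[OF J j0 a this x e(2) g(2)] show ?thesis .
  qed
  with j0 that show ?thesis by blast
qed

lemma interpolation_basis_exists_card:
  assumes "finite J" "card J = n" "lincomb_closed A"
    "\<And>f. f \<in> A \<Longrightarrow> \<exists>c. \<forall>y\<in>S. f y = (\<Sum>j\<in>J. c j * \<beta> j y)"
  shows "\<exists>k xs es. interpolation_basis S A k xs es"
  using assms
proof (induction n arbitrary: A J \<beta>)
  case 0
  then have "J = {}" by simp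
  then have "\<forall>f\<in>A. \<forall>y\<in>S. f y = 0" using "0.prems"(4) by simp
  then show ?case using interpolation_basis_vanishing by blast
next
  case (Suc n)
  show ?case
  proof (cases "\<forall>f\<in>A. \<forall>y\<in>S. f y = 0")
    case True
    then show ?thesis using interpolation_basis_vanishing by blast
  next
    case False
    then obtain f x where f: "f \<in> A" and x: "x \<in> S" and fx: "f x \<noteq> 0" by auto
    define e where "e = (\<lambda>y. f y - (1 - 1 / f x) * f y)"
    have "e \<in> A" unfolding e_def by (rule lincomb_closedD[OF Suc.prems(3) f f])
    moreover have "e x = 1" unfolding e_def using fx by (simp add: field_simps)
    ultimately have e: "e \<in> A" "e x = 1" by simp_all
    obtain j0 where j0: "j0 \<in> J" and span: "\<And>g. g \<in> A \<Longrightarrow> g x = 0 \<Longrightarrow>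
        \<exists>c. \<forall>y\<in>S. g y = (\<Sum>j\<in>J - {j0}. c j * (\<beta> j y - \<beta> j x * e y))"
      using vanishing_subspace_span[OF Suc.prems(1,4) e x] by blast
    have "lincomb_closed {g \<in> A. g x = 0}"
      using Suc.prems(3) unfolding lincomb_closed_def by auto
    moreover have "card (J - {j0}) = n" using Suc.prems(1,2) j0 by simp
    ultimately obtain k xs es where "interpolation_basis S {g \<in> A. g x = 0} k xs es"
      using Suc.IH[where J = "J - {j0}" and A = "{g \<in> A. g x = 0}"
          and \<beta> = "\<lambda>j y. \<beta> j y - \<beta> j x * e y"] Suc.prems(1) span by blast
    then show ?thesis using interpolation_basis_extend[OF Suc.prems(3) e x] by blast
  qed
qed

lemma interpolation_basis_exists:
  assumes "lincomb_closed A" "fin_dim_fun_space S A"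
  obtains n xs es where "interpolation_basis S A n xs es"
proof -
  obtain r :: nat and b where "\<forall>f\<in>A. \<exists>c. \<forall>y\<in>S. f y = (\<Sum>j<r. c j * b j y)"
    using assms(2) unfolding fin_dim_fun_space_def by blast
  then show ?thesis
    using interpolation_basis_exists_card[OF finite_lessThan refl assms(1)] that by blast
qed

lemma fin_dim_fun_space_finite:
  assumes "finite S"
  shows "fin_dim_fun_space S A"
proof -
  obtain h where h: "bij_betw h {..<card S} S"
    using ex_bij_betw_nat_finite[OF assms] by (auto simp: atLeast0LessThan)
  have "\<exists>c. \<forall>x\<in>S. \<xi> x = (\<Sum>j<card S. c j * (if x = h j then 1 else 0))" for \<xi> :: "'a \<Rightarrow> real"
  proof (intro exI[of _ "\<lambda>j. \<xi> (h j)"] ballI)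
    fix x assume "x \<in> S"
    moreover have "(\<Sum>j<card S. \<xi> (h j) * (if x = h j then 1 else 0))
        = (\<Sum>y\<in>S. \<xi> y * (if x = y then 1 else 0))"
      by (rule sum.reindex_bij_betw[OF h])
    ultimately show "\<xi> x = (\<Sum>j<card S. \<xi> (h j) * (if x = h j then 1 else 0))"
      using assms by (simp add: if_distrib cong: if_cong)
  qed
  then show ?thesis
    unfolding fin_dim_fun_space_def by (intro exI[of _ "card S"] exI[of _ "\<lambda>j x. if x = h j then 1 else 0"]) blast
qed

lemma fin_dim_fun_spaceI_two_families:
  fixes F E :: "nat \<Rightarrow> 'a \<Rightarrow> real"
  assumes "\<forall>\<xi>\<in>A. \<exists>a w. \<forall>z\<in>S. \<xi> z = (\<Sum>l<K. a l * F l z) + (\<Sum>l<M. w l * E l z)"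
  shows "fin_dim_fun_space S A"
proof -
  define b where "b = (\<lambda>j. if j < K then F j else E (j - K))"
  have "\<exists>c. \<forall>x\<in>S. \<xi> x = (\<Sum>j<K + M. c j * b j x)" if \<xi>: "\<xi> \<in> A" for \<xi>
  proof -
    obtain a w where aw: "\<forall>z\<in>S. \<xi> z = (\<Sum>l<K. a l * F l z) + (\<Sum>l<M. w l * E l z)"
      using assms \<xi> by blast
    define c where "c = (\<lambda>j. if j < K then a j else w (j - K))"
    have "(\<Sum>j<K + M. c j * b j z) = (\<Sum>l<K. a l * F l z) + (\<Sum>l<M. w l * E l z)" for z
    proof -
      have "(\<Sum>j<K + M. c j * b j z) = (\<Sum>j<K. c j * b j z) + (\<Sum>j<M. c (K + j) * b (K + j) z)"
        by (induction M) (simp_all add: add_ac)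
      then show ?thesis by (simp add: b_def c_def)
    qed
    then show ?thesis using aw by metis
  qed
  then show ?thesis unfolding fin_dim_fun_space_def by (intro exI[of _ "K + M"] exI[of _ b]) blast
qed

lemma linear_pred_diff_sum:
  fixes Q :: "('a \<Rightarrow> real) \<Rightarrow> (nat \<Rightarrow> real) \<Rightarrow> bool" and k :: nat
  assumes A: "lincomb_closed A"
    and linear: "\<And>\<xi>\<^sub>1 \<xi>\<^sub>2 c\<^sub>1 c\<^sub>2 a. \<xi>\<^sub>1 \<in> A \<Longrightarrow> \<xi>\<^sub>2 \<in> A \<Longrightarrow> Q \<xi>\<^sub>1 c\<^sub>1 \<Longrightarrow> Q \<xi>\<^sub>2 c\<^sub>2 \<Longrightarrow>
        Q (\<lambda>y. \<xi>\<^sub>1 y - a * \<xi>\<^sub>2 y) (\<lambda>j. c\<^sub>1 j - a * c\<^sub>2 j)"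
    and \<xi>: "\<xi> \<in> A" "Q \<xi> c" and \<xi>s: "\<forall>l<k. \<xi>s l \<in> A \<and> Q (\<xi>s l) (cs l)"
  shows "Q (\<lambda>y. \<xi> y - (\<Sum>l<k. a l * \<xi>s l y)) (\<lambda>j. c j - (\<Sum>l<k. a l * cs l j))"
  using \<xi>s
proof (induction k)
  case 0
  then show ?case using \<xi> by simp
next
  case (Suc k)
  then have IH: "Q (\<lambda>y. \<xi> y - (\<Sum>l<k. a l * \<xi>s l y)) (\<lambda>j. c j - (\<Sum>l<k. a l * cs l j))"
    and k: "\<xi>s k \<in> A" "Q (\<xi>s k) (cs k)"
    by simp_all
  have "(\<lambda>y. \<xi> y - (\<Sum>l<k. a l * \<xi>s l y)) \<in> A"
    using Suc.prems by (intro lincomb_closed_diff_sum[OF A \<xi>(1)]) simp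
  from linear[OF this k(1) IH k(2), of "a k"] show ?case by (simp add: algebra_simps)
qed

text \<open>Read \<open>Q \<xi> c\<close> as: \<open>c\<close> represents the image of \<open>\<xi>\<close> under a linear map to \<open>\<real>\<^sup>r\<close>.\<close>
lemma finite_generation_modulo_kernel:
  fixes Q :: "('a \<Rightarrow> real) \<Rightarrow> (nat \<Rightarrow> real) \<Rightarrow> bool"
  assumes A: "lincomb_closed A"
    and total: "\<And>\<xi>. \<xi> \<in> A \<Longrightarrow> \<exists>c. Q \<xi> c"
    and linear: "\<And>\<xi>\<^sub>1 \<xi>\<^sub>2 c\<^sub>1 c\<^sub>2 a. \<xi>\<^sub>1 \<in> A \<Longrightarrow> \<xi>\<^sub>2 \<in> A \<Longrightarrow> Q \<xi>\<^sub>1 c\<^sub>1 \<Longrightarrow> Q \<xi>\<^sub>2 c\<^sub>2 \<Longrightarrow>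
        Q (\<lambda>y. \<xi>\<^sub>1 y - a * \<xi>\<^sub>2 y) (\<lambda>j. c\<^sub>1 j - a * c\<^sub>2 j)"
    and coordinates: "\<And>\<xi> c c'. Q \<xi> c \<Longrightarrow> \<forall>j<r. c j = c' j \<Longrightarrow> Q \<xi> c'"
  obtains K :: nat and \<xi>s where "\<forall>l<K. \<xi>s l \<in> A" "\<forall>\<xi>\<in>A. \<exists>a. Q (\<lambda>y. \<xi> y - (\<Sum>l<K. a l * \<xi>s l y)) (\<lambda>_. 0)"
proof -
  define D where "D = {c. \<exists>\<xi>\<in>A. Q \<xi> c}"
  have "lincomb_closed D"
    unfolding lincomb_closed_def D_def using A linear lincomb_closedD by blast
  then obtain K ps cs where "interpolation_basis {..<r} D K ps cs"
    using interpolation_basis_exists fin_dim_fun_space_finite[OF finite_lessThan] by blast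
  then have csD: "\<forall>l<K. cs l \<in> D" and expand: "\<forall>c\<in>D. \<forall>j<r. c j = (\<Sum>l<K. c (ps l) * cs l j)"
    unfolding interpolation_basis_def by auto
  have "\<forall>l\<in>{..<K}. \<exists>\<xi>. \<xi> \<in> A \<and> Q \<xi> (cs l)" using csD unfolding D_def by blast
  then obtain \<xi>s where "\<forall>l\<in>{..<K}. \<xi>s l \<in> A \<and> Q (\<xi>s l) (cs l)"
    by (rule bchoice[THEN exE]) blast
  then have \<xi>s: "\<forall>l<K. \<xi>s l \<in> A \<and> Q (\<xi>s l) (cs l)" by simp
  have "\<exists>a. Q (\<lambda>y. \<xi> y - (\<Sum>l<K. a l * \<xi>s l y)) (\<lambda>_. 0)" if \<xi>: "\<xi> \<in> A" for \<xi>
  proof -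
    obtain c where c: "Q \<xi> c" using total \<xi> by blast
    define a where "a = (\<lambda>l. c (ps l))"
    have "Q (\<lambda>y. \<xi> y - (\<Sum>l<K. a l * \<xi>s l y)) (\<lambda>j. c j - (\<Sum>l<K. a l * cs l j))"
      by (rule linear_pred_diff_sum[OF A linear \<xi> c \<xi>s])
    moreover have "c \<in> D" unfolding D_def using \<xi> c by blast
    then have "\<forall>j<r. c j - (\<Sum>l<K. a l * cs l j) = 0"
      using expand unfolding a_def by simp
    ultimately have "Q (\<lambda>y. \<xi> y - (\<Sum>l<K. a l * \<xi>s l y)) (\<lambda>_. 0)"
      using coordinates by presburger
    then show ?thesis by blast
  qed
  moreover have "\<forall>l<K. \<xi>s l \<in> A" using \<xi>s by blast
  ultimately show ?thesis using that[of K \<xi>s] by blast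
qed

section \<open>Topological groups\<close>

lemma topological_groupD:
  assumes "topological_group G T"
  shows "group G" "topspace T = carrier G"
  using assms unfolding topological_group_def by blast+

lemma continuous_map_group_mult:
  assumes "topological_group G T" "continuous_map X T f" "continuous_map X T g"
  shows "continuous_map X T (\<lambda>x. f x \<otimes>\<^bsub>G\<^esub> g x)"
proof -
  have "continuous_map (prod_topology T T) T (\<lambda>(x, y). x \<otimes>\<^bsub>G\<^esub> y)"
    using assms(1) unfolding topological_group_def by blast
  from continuous_map_compose[OF continuous_map_pairedI[OF assms(2,3)] this]
  show ?thesis by (simp add: o_def)
qed

lemma continuous_map_group_inv:
  assumes "topological_group G T" "continuous_map X T f"
  shows "continuous_map X T (\<lambda>x. inv\<^bsub>G\<^esub> f x)"
proof -
  have "continuous_map T T (\<lambda>x. inv\<^bsub>G\<^esub> x)"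
    using assms(1) unfolding topological_group_def by blast
  from continuous_map_compose[OF assms(2) this] show ?thesis by (simp add: o_def)
qed

lemma continuous_map_group_const:
  assumes "topological_group G T" "a \<in> carrier G"
  shows "continuous_map X T (\<lambda>x. a)"
  using topological_groupD(2)[OF assms(1)] assms(2) by simp

lemma continuous_map_left_translation:
  assumes "topological_group G T" "a \<in> carrier G"
  shows "continuous_map T T (\<lambda>y. a \<otimes>\<^bsub>G\<^esub> y)"
  using continuous_map_group_mult[OF assms(1) continuous_map_group_const[OF assms] continuous_map_id]
  by (simp add: id_def)

lemma left_invariant_imp_const:
  assumes "group G"
    and "\<And>g y. g \<in> carrier G \<Longrightarrow> y \<in> carrier G \<Longrightarrow> f (inv\<^bsub>G\<^esub> g \<otimes>\<^bsub>G\<^esub> y) = f y"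
    and "z \<in> carrier G"
  shows "f z = f \<one>\<^bsub>G\<^esub>"
proof -
  interpret group G by fact
  show ?thesis using assms(2)[of "inv\<^bsub>G\<^esub> z" "\<one>\<^bsub>G\<^esub>"] assms(3) by simp
qed

section \<open>Polynomial maps\<close>

lemma iter_diff_lincomb:
  "iter_diff G gs (\<lambda>y. f y - c * g y) h = iter_diff G gs f h - c * iter_diff G gs g h"
  by (induction gs arbitrary: h) (simp_all add: left_diff_def algebra_simps)

lemma lincomb_closed_Pol: "lincomb_closed (Pol G T d)"
  unfolding lincomb_closed_def Pol_def
  by (auto simp: iter_diff_lincomb intro!: continuous_map_diff continuous_map_real_mult)

lemma iter_diff_append_single: "iter_diff G (gs @ [h]) \<xi> = iter_diff G gs (left_diff G h \<xi>)"
  by (induction gs) simp_all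

lemma left_diff_Pol_Suc:
  assumes tg: "topological_group G T" and \<xi>: "\<xi> \<in> Pol G T (Suc d)" and h: "h \<in> carrier G"
  shows "left_diff G h \<xi> \<in> Pol G T d"
proof -
  interpret group G using topological_groupD(1)[OF tg] .
  have \<xi>_cont: "continuous_map T euclideanreal \<xi>" using \<xi> unfolding Pol_def by blast
  have "continuous_map T euclideanreal (\<lambda>y. \<xi> (inv\<^bsub>G\<^esub> h \<otimes>\<^bsub>G\<^esub> y))"
    using continuous_map_compose[OF continuous_map_left_translation[OF tg] \<xi>_cont] h
    by (simp add: o_def)
  then have "continuous_map T euclideanreal (left_diff G h \<xi>)"
    unfolding left_diff_def[abs_def] using \<xi>_cont by (intro continuous_map_diff)
  moreover have "iter_diff G gs (left_diff G h \<xi>) y = 0"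
    if "length gs = Suc d" "set gs \<subseteq> carrier G" "y \<in> carrier G" for gs y
    using \<xi> that h unfolding Pol_def by (auto simp flip: iter_diff_append_single)
  ultimately show ?thesis unfolding Pol_def by blast
qed

lemma iter_diff_left_translate:
  assumes "group G" "a \<in> carrier G" "set gs \<subseteq> carrier G" "h \<in> carrier G"
  shows "iter_diff G gs (\<lambda>y. \<xi> (a \<otimes>\<^bsub>G\<^esub> y)) h =
    iter_diff G (map (\<lambda>g. a \<otimes>\<^bsub>G\<^esub> g \<otimes>\<^bsub>G\<^esub> inv\<^bsub>G\<^esub> a) gs) \<xi> (a \<otimes>\<^bsub>G\<^esub> h)"
  using assms(3,4)
proof (induction gs arbitrary: h)
  case Nil
  then show ?case by simp
next
  case (Cons g gs)
  interpret group G by fact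
  have g: "g \<in> carrier G" and h: "h \<in> carrier G" using Cons.prems by simp_all
  have "inv\<^bsub>G\<^esub> a \<otimes>\<^bsub>G\<^esub> (a \<otimes>\<^bsub>G\<^esub> h) = h" using assms(2) h by (metis inv_closed l_inv l_one m_assoc)
  then have "inv\<^bsub>G\<^esub> (a \<otimes>\<^bsub>G\<^esub> g \<otimes>\<^bsub>G\<^esub> inv\<^bsub>G\<^esub> a) \<otimes>\<^bsub>G\<^esub> (a \<otimes>\<^bsub>G\<^esub> h) = a \<otimes>\<^bsub>G\<^esub> (inv\<^bsub>G\<^esub> g \<otimes>\<^bsub>G\<^esub> h)"
    using assms(2) g h by (simp add: inv_mult_group m_assoc)
  then show ?case
    using Cons.IH[of "inv\<^bsub>G\<^esub> g \<otimes>\<^bsub>G\<^esub> h"] Cons.IH[of h] Cons.prems g assms(2) by (simp add: left_diff_def)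
qed

lemma left_translate_Pol:
  assumes tg: "topological_group G T" and \<xi>: "\<xi> \<in> Pol G T d" and a: "a \<in> carrier G"
  shows "(\<lambda>y. \<xi> (a \<otimes>\<^bsub>G\<^esub> y)) \<in> Pol G T d"
proof -
  interpret group G using topological_groupD(1)[OF tg] .
  have \<xi>_cont: "continuous_map T euclideanreal \<xi>" using \<xi> unfolding Pol_def by blast
  have "continuous_map T euclideanreal (\<lambda>y. \<xi> (a \<otimes>\<^bsub>G\<^esub> y))"
    using continuous_map_compose[OF continuous_map_left_translation[OF tg a] \<xi>_cont]
    by (simp add: o_def)
  moreover have "iter_diff G gs (\<lambda>y. \<xi> (a \<otimes>\<^bsub>G\<^esub> y)) y = 0"
    if "length gs = Suc d" "set gs \<subseteq> carrier G" "y \<in> carrier G" for gs y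
  proof -
    have "set (map (\<lambda>g. a \<otimes>\<^bsub>G\<^esub> g \<otimes>\<^bsub>G\<^esub> inv\<^bsub>G\<^esub> a) gs) \<subseteq> carrier G" using that a by auto
    then show ?thesis
      using iter_diff_left_translate[OF is_group a that(2,3)] \<xi> that a unfolding Pol_def by auto
  qed
  ultimately show ?thesis unfolding Pol_def by blast
qed

lemma Pol_0_const:
  assumes tg: "topological_group G T" and \<xi>: "\<xi> \<in> Pol G T 0" and z: "z \<in> carrier G"
  shows "\<xi> z = \<xi> \<one>\<^bsub>G\<^esub>"
proof (rule left_invariant_imp_const[OF topological_groupD(1)[OF tg] _ z])
  fix g y assume g: "g \<in> carrier G" and y: "y \<in> carrier G"
  have "\<forall>gs. length gs = Suc 0 \<and> set gs \<subseteq> carrier G \<longrightarrow> (\<forall>h\<in>carrier G. iter_diff G gs \<xi> h = 0)"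
    using \<xi> unfolding Pol_def by blast
  from this[rule_format, of "[g]" y] g y have "left_diff G g \<xi> y = 0" by simp
  then show "\<xi> (inv\<^bsub>G\<^esub> g \<otimes>\<^bsub>G\<^esub> y) = \<xi> y" by (simp add: left_diff_def)
qed

lemma fin_dim_Pol_0:
  assumes "topological_group G T"
  shows "fin_dim_fun_space (carrier G) (Pol G T 0)"
  unfolding fin_dim_fun_space_def
proof (intro exI[of _ "1::nat"] exI[of _ "\<lambda>_ _. 1"] ballI)
  fix \<xi> assume "\<xi> \<in> Pol G T 0"
  then show "\<exists>c. \<forall>x\<in>carrier G. \<xi> x = (\<Sum>j<1::nat. c j * 1)"
    using Pol_0_const[OF assms] by (intro exI[of _ "\<lambda>_. \<xi> \<one>\<^bsub>G\<^esub>"]) simp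
qed

section \<open>The induction step\<close>

lemma is_coboundary_degree_one:
  assumes "is_coboundary G T m \<rho> 1 f"
  obtains v where "\<And>g k. g \<in> carrier G \<Longrightarrow> k < m \<Longrightarrow>
    f (\<lambda>_\<in>{..<1}. g) k = (\<Sum>l<m. \<rho> g k l * v l) - v k"
proof -
  obtain h where h: "\<forall>x\<in>PiE {..<1} (\<lambda>_. carrier G). \<forall>k<m. f x k = coboundary G m \<rho> 0 h x k"
    using assms unfolding is_coboundary_def by (auto simp: One_nat_def)
  have "restrict x {..<0} = (\<lambda>_. undefined)" for x :: "nat \<Rightarrow> 'a"
    by (auto simp: restrict_def)
  then have "f (\<lambda>_\<in>{..<1}. g) k = (\<Sum>l<m. \<rho> g k l * h (\<lambda>_. undefined) l) - h (\<lambda>_. undefined) k"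
    if "g \<in> carrier G" "k < m" for g k
    using h that by (simp add: coboundary_def)
  then show ?thesis using that by blast
qed

locale Pol_interpolation =
  fixes G :: "('g, 'b) monoid_scheme" (structure) and T :: "'g topology" and d m :: nat
    and xs :: "nat \<Rightarrow> 'g" and es :: "nat \<Rightarrow> 'g \<Rightarrow> real"
  assumes topological_group: "topological_group G T"
    and basis: "interpolation_basis (carrier G) (Pol G T d) m xs es"
begin

sublocale group G by (rule topological_groupD(1)[OF topological_group])

lemma xs_carrier: "l < m \<Longrightarrow> xs l \<in> carrier G"
  and es_Pol: "l < m \<Longrightarrow> es l \<in> Pol G T d"
  and es_xs: "l < m \<Longrightarrow> j < m \<Longrightarrow> es l (xs j) = (if l = j then 1 else 0)"
  and Pol_interpolate: "f \<in> Pol G T d \<Longrightarrow> y \<in> carrier G \<Longrightarrow> f y = (\<Sum>l<m. f (xs l) * es l y)"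
  using basis unfolding interpolation_basis_def by auto

text \<open>The matrix of the left translation \<open>\<xi> \<mapsto> \<xi> (g\<^sup>-\<^sup>1 \<cdot>)\<close> of \<open>Pol\<^sub>d\<close> in the basis \<open>es\<close>.\<close>
definition translation_matrix :: "'g \<Rightarrow> nat \<Rightarrow> nat \<Rightarrow> real" where
  "translation_matrix g k l = es l (inv g \<otimes> xs k)"

lemma es_left_translate:
  assumes "g \<in> carrier G" "y \<in> carrier G" "l < m"
  shows "es l (inv g \<otimes> y) = (\<Sum>p<m. translation_matrix g p l * es p y)"
  using Pol_interpolate[OF left_translate_Pol[OF topological_group es_Pol[OF assms(3)], of "inv g"]]
    assms by (simp add: translation_matrix_def)

lemma cont_rep_translation_matrix: "cont_rep G T m translation_matrix"
  unfolding cont_rep_def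
proof (intro conjI allI impI ballI)
  fix k l assume k: "k < m" and l: "l < m"
  have "continuous_map T T (\<lambda>g. inv g \<otimes> xs k)"
    by (intro continuous_map_group_mult[OF topological_group] continuous_map_group_const[OF topological_group]
        continuous_map_group_inv[OF topological_group] continuous_map_id[unfolded id_def] xs_carrier[OF k])
  moreover have "continuous_map T euclideanreal (es l)" using es_Pol[OF l] unfolding Pol_def by blast
  ultimately have "continuous_map T euclideanreal (es l \<circ> (\<lambda>g. inv g \<otimes> xs k))"
    by (rule continuous_map_compose)
  then show "continuous_map T euclideanreal (\<lambda>g. translation_matrix g k l)"
    by (simp add: translation_matrix_def o_def)
  show "translation_matrix \<one> k l = (if k = l then 1 else 0)"
    using es_xs[OF l k] xs_carrier[OF k] unfolding translation_matrix_def by auto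
next
  fix g h k l assume g: "g \<in> carrier G" and h: "h \<in> carrier G" and k: "k < m" and l: "l < m"
  have "translation_matrix (g \<otimes> h) k l = es l (inv h \<otimes> (inv g \<otimes> xs k))"
    unfolding translation_matrix_def using g h xs_carrier[OF k] by (simp add: inv_mult_group m_assoc)
  also have "\<dots> = (\<Sum>p<m. translation_matrix g k p * translation_matrix h p l)"
    using es_left_translate[OF h _ l] g xs_carrier[OF k]
    by (simp add: translation_matrix_def mult.commute)
  finally show "translation_matrix (g \<otimes> h) k l = (\<Sum>p<m. translation_matrix g k p * translation_matrix h p l)" .
qed

text \<open>The 1-cochain \<open>g \<mapsto> \<partial>\<^sub>g \<xi>\<close>, with \<open>\<partial>\<^sub>g \<xi> \<in> Pol\<^sub>d\<close> written in the basis \<open>es\<close>.\<close>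
definition diff_cocycle :: "('g \<Rightarrow> real) \<Rightarrow> (nat \<Rightarrow> 'g) \<Rightarrow> nat \<Rightarrow> real" where
  "diff_cocycle \<xi> x k = left_diff G (x 0) \<xi> (xs k)"

lemma diff_cocycle_lincomb:
  "diff_cocycle (\<lambda>y. \<xi>\<^sub>1 y - a * \<xi>\<^sub>2 y) x k = diff_cocycle \<xi>\<^sub>1 x k - a * diff_cocycle \<xi>\<^sub>2 x k"
  by (simp add: diff_cocycle_def left_diff_def algebra_simps)

lemma diff_cocycle_cochain:
  assumes "continuous_map T euclideanreal \<xi>"
  shows "diff_cocycle \<xi> \<in> cochains T m 1"
  unfolding cochains_def
proof (intro CollectI allI impI)
  fix k assume k: "k < m"
  have "continuous_map (product_topology (\<lambda>_. T) {..<1::nat}) T (\<lambda>x. x 0)"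
    by (rule continuous_map_product_projection) simp
  then have "continuous_map (product_topology (\<lambda>_. T) {..<1::nat}) T (\<lambda>x. inv (x 0) \<otimes> xs k)"
    by (intro continuous_map_group_mult[OF topological_group] continuous_map_group_inv[OF topological_group]
        continuous_map_group_const[OF topological_group xs_carrier[OF k]])
  from continuous_map_compose[OF this assms]
  show "continuous_map (product_topology (\<lambda>_. T) {..<1::nat}) euclideanreal (\<lambda>x. diff_cocycle \<xi> x k)"
    unfolding diff_cocycle_def left_diff_def by (intro continuous_map_diff) (simp_all add: o_def)
qed

lemma diff_cocycle_cocycle:
  assumes \<xi>: "\<xi> \<in> Pol G T (Suc d)"
  shows "diff_cocycle \<xi> \<in> cocycles G T m translation_matrix 1"
proof -
  have "coboundary G m translation_matrix 1 (diff_cocycle \<xi>) x k = 0"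
    if x: "x \<in> PiE {..<Suc 1} (\<lambda>_. carrier G)" and k: "k < m" for x k
  proof -
    have x0: "x 0 \<in> carrier G" and x1: "x 1 \<in> carrier G" using x by (auto simp: PiE_iff)
    define y where "y = inv (x 0) \<otimes> xs k"
    have y: "y \<in> carrier G" using x0 xs_carrier[OF k] unfolding y_def by simp
    have "left_diff G (x 1) \<xi> y = (\<Sum>l<m. left_diff G (x 1) \<xi> (xs l) * es l y)"
      by (rule Pol_interpolate[OF left_diff_Pol_Suc[OF topological_group \<xi> x1] y])
    then have "(\<Sum>l<m. translation_matrix (x 0) k l * left_diff G (x 1) \<xi> (xs l))
        = \<xi> (inv (x 1) \<otimes> y) - \<xi> y"
      unfolding translation_matrix_def y_def by (simp add: left_diff_def mult.commute)
    moreover have "inv (x 0 \<otimes> x 1) \<otimes> xs k = inv (x 1) \<otimes> y"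
      using x0 x1 xs_carrier[OF k] unfolding y_def by (simp add: inv_mult_group m_assoc)
    ultimately show ?thesis
      unfolding coboundary_def diff_cocycle_def by (simp add: left_diff_def y_def)
  qed
  moreover have "diff_cocycle \<xi> \<in> cochains T m 1"
    using \<xi> diff_cocycle_cochain unfolding Pol_def by blast
  ultimately show ?thesis unfolding cocycles_def by blast
qed

text \<open>\<open>\<eta>\<close> and \<open>\<Sum>\<^sub>l w\<^sub>l es\<^sub>l\<close> have the same differences, hence differ by a constant.\<close>
lemma diff_cocycle_coboundary_eq:
  assumes \<eta>: "\<eta> \<in> Pol G T (Suc d)"
    and cob: "\<And>g k. g \<in> carrier G \<Longrightarrow> k < m \<Longrightarrow>
      left_diff G g \<eta> (xs k) = (\<Sum>l<m. translation_matrix g k l * w l) - w k"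
    and z: "z \<in> carrier G"
  shows "\<eta> z = (\<Sum>l<m. w l * es l z) + (\<eta> \<one> - (\<Sum>l<m. w l * es l \<one>))"
proof -
  define u where "u = (\<lambda>y. \<Sum>l<m. w l * es l y)"
  have "\<eta> (inv g \<otimes> y) - u (inv g \<otimes> y) = \<eta> y - u y" if g: "g \<in> carrier G" and y: "y \<in> carrier G" for g y
  proof -
    have "\<eta> (inv g \<otimes> y) - \<eta> y = (\<Sum>k<m. left_diff G g \<eta> (xs k) * es k y)"
      using Pol_interpolate[OF left_diff_Pol_Suc[OF topological_group \<eta> g] y]
      by (simp add: left_diff_def)
    also have "\<dots> = (\<Sum>k<m. ((\<Sum>l<m. translation_matrix g k l * w l) - w k) * es k y)"
      using cob[OF g] by (intro sum.cong) simp_all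
    also have "\<dots> = (\<Sum>k<m. \<Sum>l<m. w l * (translation_matrix g k l * es k y)) - u y"
      unfolding u_def by (simp add: right_diff_distrib sum_subtractf sum_distrib_left mult_ac)
    also have "\<dots> = (\<Sum>l<m. w l * (\<Sum>k<m. translation_matrix g k l * es k y)) - u y"
      by (subst sum.swap) (simp add: sum_distrib_left)
    also have "\<dots> = u (inv g \<otimes> y) - u y"
      unfolding u_def using es_left_translate[OF g y] by (intro arg_cong2[where f = minus] sum.cong) simp_all
    finally show ?thesis by simp
  qed
  from left_invariant_imp_const[OF is_group _ z, of "\<lambda>y. \<eta> y - u y", OF this]
  show ?thesis unfolding u_def by simp
qed

text \<open>\<open>c\<close> are coordinates of the cohomology class of \<open>diff_cocycle \<xi>\<close> with respect to the cocycles
  \<open>b\<^sub>0, \<dots>, b\<^bsub>r-1\<^esub>\<close>; \<open>w\<close> witnesses the coboundary \<open>g \<mapsto> \<rho>(g) w - w\<close> of the difference.\<close>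
definition cohomology_coordinates ::
    "nat \<Rightarrow> (nat \<Rightarrow> (nat \<Rightarrow> 'g) \<Rightarrow> nat \<Rightarrow> real) \<Rightarrow> ('g \<Rightarrow> real) \<Rightarrow> (nat \<Rightarrow> real) \<Rightarrow> bool" where
  "cohomology_coordinates r b \<xi> c \<longleftrightarrow> (\<exists>w. \<forall>g\<in>carrier G. \<forall>k<m.
      diff_cocycle \<xi> (\<lambda>_\<in>{..<1}. g) k - (\<Sum>j<r. c j * b j (\<lambda>_\<in>{..<1}. g) k)
        = (\<Sum>l<m. translation_matrix g k l * w l) - w k)"

lemma cohomology_coordinates_exist:
  assumes b: "\<forall>f\<in>cocycles G T m translation_matrix 1.
      \<exists>c. is_coboundary G T m translation_matrix 1 (\<lambda>x k. f x k - (\<Sum>j<r. c j * b j x k))"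
    and \<xi>: "\<xi> \<in> Pol G T (Suc d)"
  shows "\<exists>c. cohomology_coordinates r b \<xi> c"
proof -
  obtain c where
    "is_coboundary G T m translation_matrix 1 (\<lambda>x k. diff_cocycle \<xi> x k - (\<Sum>j<r. c j * b j x k))"
    using b diff_cocycle_cocycle[OF \<xi>] by blast
  then obtain w where "\<And>g k. g \<in> carrier G \<Longrightarrow> k < m \<Longrightarrow>
      diff_cocycle \<xi> (\<lambda>_\<in>{..<1}. g) k - (\<Sum>j<r. c j * b j (\<lambda>_\<in>{..<1}. g) k)
        = (\<Sum>l<m. translation_matrix g k l * w l) - w k"
    by (rule is_coboundary_degree_one) blast
  then show ?thesis unfolding cohomology_coordinates_def by blast
qed

lemma cohomology_coordinates_lincomb:
  assumes "cohomology_coordinates r b \<xi>\<^sub>1 c\<^sub>1" "cohomology_coordinates r b \<xi>\<^sub>2 c\<^sub>2"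
  shows "cohomology_coordinates r b (\<lambda>y. \<xi>\<^sub>1 y - a * \<xi>\<^sub>2 y) (\<lambda>j. c\<^sub>1 j - a * c\<^sub>2 j)"
proof -
  let ?pt = "\<lambda>g. \<lambda>_\<in>{..<1::nat}. g"
  obtain w\<^sub>1 w\<^sub>2 where
    w\<^sub>1: "\<forall>g\<in>carrier G. \<forall>k<m. diff_cocycle \<xi>\<^sub>1 (?pt g) k - (\<Sum>j<r. c\<^sub>1 j * b j (?pt g) k)
      = (\<Sum>l<m. translation_matrix g k l * w\<^sub>1 l) - w\<^sub>1 k" and
    w\<^sub>2: "\<forall>g\<in>carrier G. \<forall>k<m. diff_cocycle \<xi>\<^sub>2 (?pt g) k - (\<Sum>j<r. c\<^sub>2 j * b j (?pt g) k)
      = (\<Sum>l<m. translation_matrix g k l * w\<^sub>2 l) - w\<^sub>2 k"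
    using assms unfolding cohomology_coordinates_def by blast
  have lin_sum: "(\<Sum>j<n. (x j - a * y j) * z j) = (\<Sum>j<n. x j * z j) - a * (\<Sum>j<n. y j * z j)"
    for n and x y z :: "nat \<Rightarrow> real"
    by (simp add: left_diff_distrib sum_subtractf sum_distrib_left mult.assoc)
  have "diff_cocycle (\<lambda>y. \<xi>\<^sub>1 y - a * \<xi>\<^sub>2 y) (?pt g) k - (\<Sum>j<r. (c\<^sub>1 j - a * c\<^sub>2 j) * b j (?pt g) k)
      = (\<Sum>l<m. translation_matrix g k l * (w\<^sub>1 l - a * w\<^sub>2 l)) - (w\<^sub>1 k - a * w\<^sub>2 k)"
    if g: "g \<in> carrier G" and k: "k < m" for g k
  proof -
    have "diff_cocycle (\<lambda>y. \<xi>\<^sub>1 y - a * \<xi>\<^sub>2 y) (?pt g) k - (\<Sum>j<r. (c\<^sub>1 j - a * c\<^sub>2 j) * b j (?pt g) k)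
        = (diff_cocycle \<xi>\<^sub>1 (?pt g) k - (\<Sum>j<r. c\<^sub>1 j * b j (?pt g) k))
          - a * (diff_cocycle \<xi>\<^sub>2 (?pt g) k - (\<Sum>j<r. c\<^sub>2 j * b j (?pt g) k))"
      unfolding diff_cocycle_lincomb lin_sum right_diff_distrib by linarith
    also have "\<dots> = (\<Sum>l<m. translation_matrix g k l * (w\<^sub>1 l - a * w\<^sub>2 l)) - (w\<^sub>1 k - a * w\<^sub>2 k)"
      unfolding w\<^sub>1[rule_format, OF g k] w\<^sub>2[rule_format, OF g k] right_diff_distrib sum_subtractf
        mult.left_commute[of _ a] sum_distrib_left[symmetric] by linarith
    finally show ?thesis .
  qed
  then show ?thesis
    unfolding cohomology_coordinates_def by (intro exI[of _ "\<lambda>l. w\<^sub>1 l - a * w\<^sub>2 l"]) blast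
qed

lemma cohomology_coordinates_cong:
  assumes "cohomology_coordinates r b \<xi> c" "\<forall>j<r. c j = c' j"
  shows "cohomology_coordinates r b \<xi> c'"
proof -
  have sums: "(\<Sum>j<r. c j * b j x k) = (\<Sum>j<r. c' j * b j x k)" for x k
    using assms(2) by (intro sum.cong) auto
  show ?thesis using assms(1) unfolding cohomology_coordinates_def sums .
qed

lemma cohomology_coordinates_zero_eq:
  assumes \<eta>: "\<eta> \<in> Pol G T (Suc d)" and "cohomology_coordinates r b \<eta> (\<lambda>_. 0)"
  obtains w \<kappa> where "\<And>z. z \<in> carrier G \<Longrightarrow> \<eta> z = (\<Sum>l<m. w l * es l z) + \<kappa>"
proof -
  obtain w where w: "\<forall>g\<in>carrier G. \<forall>k<m.
      diff_cocycle \<eta> (\<lambda>_\<in>{..<1}. g) k = (\<Sum>l<m. translation_matrix g k l * w l) - w k"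
    using assms(2) unfolding cohomology_coordinates_def by auto
  have "left_diff G g \<eta> (xs k) = (\<Sum>l<m. translation_matrix g k l * w l) - w k"
    if "g \<in> carrier G" "k < m" for g k
    using w[rule_format, OF that] unfolding diff_cocycle_def by simp
  from that[OF diff_cocycle_coboundary_eq[OF \<eta> this]] show ?thesis .
qed

lemma fin_dim_Pol_Suc:
  assumes "cohom_fin_dim G T"
  shows "fin_dim_fun_space (carrier G) (Pol G T (Suc d))"
proof -
  have "fin_dim_cohomology G T m translation_matrix 1"
    using assms cont_rep_translation_matrix unfolding cohom_fin_dim_def by blast
  then obtain r :: nat and b where b: "\<forall>f\<in>cocycles G T m translation_matrix 1.
      \<exists>c. is_coboundary G T m translation_matrix 1 (\<lambda>x k. f x k - (\<Sum>j<r. c j * b j x k))"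
    unfolding fin_dim_cohomology_def by blast
  obtain K :: nat and \<xi>s where \<xi>s: "\<forall>l<K. \<xi>s l \<in> Pol G T (Suc d)" and kernel:
    "\<forall>\<xi>\<in>Pol G T (Suc d). \<exists>a. cohomology_coordinates r b (\<lambda>y. \<xi> y - (\<Sum>l<K. a l * \<xi>s l y)) (\<lambda>_. 0)"
  proof (rule finite_generation_modulo_kernel[OF lincomb_closed_Pol,
        where Q = "cohomology_coordinates r b" and r = r])
    show "\<exists>c. cohomology_coordinates r b \<xi> c" if "\<xi> \<in> Pol G T (Suc d)" for \<xi>
      by (rule cohomology_coordinates_exist[OF b that])
    show "cohomology_coordinates r b (\<lambda>y. \<xi>\<^sub>1 y - a * \<xi>\<^sub>2 y) (\<lambda>j. c\<^sub>1 j - a * c\<^sub>2 j)"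
      if "\<xi>\<^sub>1 \<in> Pol G T (Suc d)" "\<xi>\<^sub>2 \<in> Pol G T (Suc d)"
        "cohomology_coordinates r b \<xi>\<^sub>1 c\<^sub>1" "cohomology_coordinates r b \<xi>\<^sub>2 c\<^sub>2" for \<xi>\<^sub>1 \<xi>\<^sub>2 c\<^sub>1 c\<^sub>2 a
      by (rule cohomology_coordinates_lincomb[OF that(3,4)])
    show "cohomology_coordinates r b \<xi> c'" if "cohomology_coordinates r b \<xi> c" "\<forall>j<r. c j = c' j" for \<xi> c c'
      by (rule cohomology_coordinates_cong[OF that])
  qed
  have "\<exists>a w. \<forall>z\<in>carrier G.
      \<xi> z = (\<Sum>l<K. a l * \<xi>s l z) + (\<Sum>l<Suc m. w l * (es(m := \<lambda>_. 1)) l z)"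
    if \<xi>: "\<xi> \<in> Pol G T (Suc d)" for \<xi>
  proof -
    obtain a where a: "cohomology_coordinates r b (\<lambda>y. \<xi> y - (\<Sum>l<K. a l * \<xi>s l y)) (\<lambda>_. 0)"
      using kernel \<xi> by blast
    obtain w \<kappa> where w: "\<And>z. z \<in> carrier G \<Longrightarrow> \<xi> z - (\<Sum>l<K. a l * \<xi>s l z) = (\<Sum>l<m. w l * es l z) + \<kappa>"
      by (rule cohomology_coordinates_zero_eq[OF lincomb_closed_diff_sum[OF lincomb_closed_Pol \<xi> \<xi>s] a]) blast
    have sum_upd: "(\<Sum>l<Suc m. (w(m := \<kappa>)) l * (es(m := \<lambda>_. 1)) l z) = (\<Sum>l<m. w l * es l z) + \<kappa>" for z
    proof -
      have "(\<Sum>l<m. (w(m := \<kappa>)) l * (es(m := \<lambda>_. 1)) l z) = (\<Sum>l<m. w l * es l z)"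
        by (intro sum.cong) auto
      then show ?thesis by simp
    qed
    have "\<xi> z = (\<Sum>l<K. a l * \<xi>s l z) + (\<Sum>l<Suc m. (w(m := \<kappa>)) l * (es(m := \<lambda>_. 1)) l z)"
      if "z \<in> carrier G" for z
      unfolding sum_upd using w[OF that] by linarith
    then show ?thesis by blast
  qed
  then show ?thesis
    by (intro fin_dim_fun_spaceI_two_families[where F = \<xi>s and E = "es(m := \<lambda>_. 1)"]) blast
qed

end

text \<open>Only the topological group structure of \<open>G\<close> is used: once \<open>H\<^sup>1\<close> is known to be finite
  dimensional, local compactness and second countability play no further role.\<close>
theorem corollary6p7:
  fixes G :: "('g, 'b) monoid_scheme" and T :: "'g topology"
  assumes "lcsc_group G T"
    and "cohom_fin_dim G T"
  shows "\<forall>d. fin_dim_fun_space (carrier G) (Pol G T d)"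
proof
  fix d
  have tg: "topological_group G T" using assms(1) unfolding lcsc_group_def by blast
  show "fin_dim_fun_space (carrier G) (Pol G T d)"
  proof (induction d)
    case 0
    show ?case by (rule fin_dim_Pol_0[OF tg])
  next
    case (Suc d)
    then obtain m xs es where "interpolation_basis (carrier G) (Pol G T d) m xs es"
      using interpolation_basis_exists lincomb_closed_Pol by blast
    with tg interpret Pol_interpolation G T d m xs es by unfold_locales
    show ?case by (rule fin_dim_Pol_Suc[OF assms(2)])
  qed
qed

end
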